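(* Let $c$ be a prime of the form $2^r\cdot 3+1$ ($r\ge1$), and let $a,b>1$ be integers with $a,b,c$ pairwise coprime and $e_c(b)=3$. Suppose positive integers $z,Y,Z$ with $z\le Z$ and $Y\equiv 4\pmod 6$ satisfy $a+b=c^z$ and $a+b^Y=c^Z$, and let $e=\nu_c((Y-1)/3)$. Then $Z\ge 2z-2e$.
   Context: For a positive integer $M$ and an integer $A$ coprime to $M$, $e_M(A)$ denotes the least positive integer $e$ such that $A^e\equiv \pm1\pmod M$. $\nu_c$ is the $c$-adic valuation. *)

theory Defs
  imports "HOL-Number_Theory.Number_Theory"
begin

text \<open>e_M(A): least positive e with A^e = +-1 (mod M), for A coprime to M.\<close>
definition pm_order :: "nat \<Rightarrow> int \<Rightarrow> nat" where
  "pm_order M A = (LEAST e. e > 0 \<and> ([A ^ e = 1] (mod int M) \<or> [A ^ e = -1] (mod int M)))"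

end

theory Submission
  imports Defs
begin

text \<open>
  Subtracting the two equations gives \<open>b (b^(Y-1) - 1) = c^z (c^(Z-z) - 1)\<close>, so \<open>c^z\<close> divides
  \<open>(b^3)^k - 1\<close> with \<open>k = (Y-1)/3\<close> odd. As \<open>e\<^sub>c(b) = 3\<close> we have \<open>b^3 \<equiv> \<plusminus>1 (mod c)\<close>, and the
  oddness of \<open>k\<close> forces \<open>b^3 \<equiv> 1\<close>. Lifting the exponent for the odd prime \<open>c\<close> then yields
  \<open>c^(z-e) | b^3 - 1 = (b - 1)(b^2 + b + 1)\<close>, and \<open>c\<close> does not divide \<open>b - 1\<close> because
  \<open>e\<^sub>c(b) \<noteq> 1\<close>. Hence \<open>c^(2(z-e)) \<le> (b^2 + b + 1)^2 < 4 b^4 \<le> c b^Y < c^(Z+1)\<close>.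
\<close>

lemma square_dvd_power_sub_one_sub_linear:
  fixes x :: "'a::comm_ring_1"
  shows "(x - 1)^2 dvd x^t - 1 - of_nat t * (x - 1)"
proof (induction t)
  case 0
  then show ?case by simp
next
  case (Suc t)
  have "x^Suc t - 1 - of_nat (Suc t) * (x - 1)
        = x * (x^t - 1 - of_nat t * (x - 1)) + of_nat t * (x - 1)^2"
    by (simp add: algebra_simps power2_eq_square)
  then show ?case using Suc by simp
qed

lemma twice_sum_lessThan_int: "2 * (\<Sum>t<n. int t) = int n * (int n - 1)"
  by (induction n) (auto simp: algebra_simps)

lemma geometric_sum_cong_mod_square:
  fixes p :: nat and x :: int
  assumes "odd p" and "int p dvd x - 1"
  shows "int p^2 dvd (\<Sum>t<p. x^t) - int p"
proof -
  obtain h where h: "p = 2 * h + 1" using assms(1) oddE by blast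
  have "(\<Sum>t<p. x^t) - int p = (\<Sum>t<p. x^t - 1)"
    by (simp add: sum_subtractf)
  also have "\<dots> = (\<Sum>t<p. x^t - 1 - int t * (x - 1)) + (x - 1) * (\<Sum>t<p. int t)"
    by (simp add: sum.distrib [symmetric] sum_distrib_left)
  also have "(\<Sum>t<p. int t) = int p * int h"
    using twice_sum_lessThan_int[of p] h by (simp add: algebra_simps)
  finally have sum_split: "(\<Sum>t<p. x^t) - int p
      = (\<Sum>t<p. x^t - 1 - int t * (x - 1)) + (x - 1) * (int p * int h)" .
  have "(x - 1)^2 dvd (\<Sum>t<p. x^t - 1 - int t * (x - 1))"
    using square_dvd_power_sub_one_sub_linear[of x] by (intro dvd_sum) simp
  moreover have "int p^2 dvd (x - 1)^2" using assms(2) by simp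
  moreover have "int p^2 dvd (x - 1) * (int p * int h)"
    using assms(2) by (simp add: power2_eq_square mult_dvd_mono)
  ultimately show ?thesis unfolding sum_split by (meson dvd_add dvd_trans)
qed

lemma prime_power_dvd_sub_one_if_coprime_exponent:
  fixes p m j :: nat and x :: int
  assumes "prime p" and "[x = 1] (mod int p)" and "\<not> p dvd m"
    and "int p^j dvd x^m - 1"
  shows "int p^j dvd x - 1"
proof -
  have "[(\<Sum>t<m. x^t) = (\<Sum>t<m. 1)] (mod int p)"
    by (intro cong_sum) (metis assms(2) cong_pow power_one)
  then have "\<not> int p dvd (\<Sum>t<m. x^t)"
    using assms(3) cong_dvd_iff by fastforce
  then have "coprime (int p^j) (\<Sum>t<m. x^t)"
    using assms(1) by (simp add: prime_imp_coprime)
  moreover have "int p^j dvd (x - 1) * (\<Sum>t<m. x^t)"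
    using assms(4) power_diff_1_eq[of x m] by simp
  ultimately show ?thesis using coprime_dvd_mult_left_iff by blast
qed

lemma prime_power_dvd_sub_one_if_prime_exponent:
  fixes p i :: nat and x :: int
  assumes "prime p" and "odd p" and "[x = 1] (mod int p)"
    and "int p^Suc i dvd x^p - 1"
  shows "int p^i dvd x - 1"
proof -
  have "int p dvd x - 1" using assms(3) by (simp add: cong_iff_dvd_diff cong_sym_eq)
  then obtain q where "(\<Sum>t<p. x^t) - int p = int p^2 * q"
    using geometric_sum_cong_mod_square[OF assms(2)] by blast
  then have q: "(\<Sum>t<p. x^t) = int p * (1 + int p * q)"
    by (simp add: algebra_simps power2_eq_square)
  have "x^p - 1 = int p * ((x - 1) * (1 + int p * q))"
    using power_diff_1_eq[of x p] q by simp
  then have "int p^i dvd (x - 1) * (1 + int p * q)"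
    using assms(1,4) by (simp add: prime_gt_0_nat)
  moreover have "\<not> int p dvd 1 + int p * q"
    using assms(1) by (auto simp: dvd_add_left_iff)
  then have "coprime (int p^i) (1 + int p * q)"
    using assms(1) by (simp add: prime_imp_coprime)
  ultimately show ?thesis using coprime_dvd_mult_left_iff by blast
qed

lemma prime_power_dvd_sub_one_if_prime_power_exponent:
  fixes p j s :: nat and x :: int
  assumes "prime p" and "odd p" and "[x = 1] (mod int p)"
    and "int p^(j + s) dvd x^(p^s) - 1"
  shows "int p^j dvd x - 1"
  using assms(3,4)
proof (induction s arbitrary: x j)
  case 0
  then show ?case by simp
next
  case (Suc s)
  have "[x^p = 1] (mod int p)" using Suc.prems(1) by (metis cong_pow power_one)
  moreover have "int p^(Suc j + s) dvd (x^p)^(p^s) - 1"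
    using Suc.prems(2) by (simp add: power_mult [symmetric] mult.commute)
  ultimately have "int p^Suc j dvd x^p - 1" by (rule Suc.IH)
  then show ?case
    using prime_power_dvd_sub_one_if_prime_exponent assms(1,2) Suc.prems(1) by blast
qed

lemma prime_power_dvd_sub_one_lift:
  fixes p k z :: nat and x :: int
  assumes "prime p" and "odd p" and "[x = 1] (mod int p)" and "k \<noteq> 0"
    and "int p^z dvd x^k - 1"
  shows "int p^(z - multiplicity p k) dvd x - 1"
proof -
  define e where "e = multiplicity p k"
  obtain m where k: "k = p^e * m" and "\<not> p dvd m"
    using multiplicity_decompose'[of k p] assms(1,4) not_prime_unit unfolding e_def by blast
  have "[x^(p^e) = 1] (mod int p)" using assms(3) by (metis cong_pow power_one)
  moreover have "int p^z dvd (x^(p^e))^m - 1"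
    using assms(5) by (simp add: k power_mult)
  ultimately have dvd_pow: "int p^z dvd x^(p^e) - 1"
    using prime_power_dvd_sub_one_if_coprime_exponent assms(1) \<open>\<not> p dvd m\<close> by blast
  show ?thesis
  proof (cases "e \<le> z")
    case True
    then have "int p^(z - e + e) dvd x^(p^e) - 1" using dvd_pow by simp
    then show ?thesis
      unfolding e_def [symmetric]
      using prime_power_dvd_sub_one_if_prime_power_exponent assms(1-3) by blast
  next
    case False
    then show ?thesis unfolding e_def [symmetric] by simp
  qed
qed

lemma pm_order_cong_pm_one:
  fixes p b :: nat
  assumes "prime p" and "\<not> p dvd b"
  shows "[int b ^ pm_order p (int b) = 1] (mod int p) \<or> [int b ^ pm_order p (int b) = -1] (mod int p)"
proof -
  define P where "P e \<longleftrightarrow> 0 < e \<and> ([int b ^ e = 1] (mod int p) \<or> [int b ^ e = -1] (mod int p))" for e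
  have "[b ^ (p - 1) = 1] (mod p)" using fermat_theorem assms by blast
  then have "P (p - 1)"
    using prime_gt_1_nat [OF assms(1)] unfolding P_def
    by (metis cong_int_iff of_nat_1 of_nat_power zero_less_diff)
  then have "P (pm_order p (int b))" unfolding pm_order_def P_def [symmetric] by (rule LeastI)
  then show ?thesis unfolding P_def by blast
qed

lemma not_cong_pm_one_below_pm_order:
  assumes "0 < e" and "e < pm_order M A"
  shows "\<not> [A ^ e = 1] (mod int M)" and "\<not> [A ^ e = -1] (mod int M)"
  using not_less_Least [OF assms(2) [unfolded pm_order_def]] assms(1) by auto

lemma cong_one_if_odd_power_cong_one:
  fixes x m :: int
  assumes "m > 2" and "[x = 1] (mod m) \<or> [x = -1] (mod m)"
    and "[x ^ k = 1] (mod m)" and "odd k"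
  shows "[x = 1] (mod m)"
proof (rule ccontr)
  assume "\<not> [x = 1] (mod m)"
  then have "[x ^ k = (-1) ^ k] (mod m)" using assms(2) cong_pow by blast
  then have "[-1 = 1] (mod m)" using assms(3,4) by (metis cong_sym cong_trans power_minus_odd power_one)
  then have "m dvd 2" by (simp add: cong_iff_dvd_diff)
  then show False using assms(1) zdvd_imp_le by fastforce
qed

lemma dvd_pow_pred_sub_one_if_sums:
  fixes a b c z Z Y :: nat
  assumes "a + b = c ^ z" and "a + b ^ Y = c ^ Z" and "z \<le> Z" and "Y > 0"
    and "coprime b c"
  shows "int c ^ z dvd int b ^ (Y - 1) - 1"
proof -
  have "int b * (int b ^ (Y - 1) - 1) = int b ^ Y - int b"
    using assms(4) by (simp add: algebra_simps power_Suc [symmetric])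
  also have "\<dots> = int c ^ Z - int c ^ z"
    using arg_cong [OF assms(1), of int] arg_cong [OF assms(2), of int] by simp
  also have "\<dots> = int c ^ z * (int c ^ (Z - z) - 1)"
    using assms(3) by (simp add: algebra_simps power_add [symmetric])
  finally have "int c ^ z dvd int b * (int b ^ (Y - 1) - 1)" by simp
  moreover have "coprime (int c ^ z) (int b)" using assms(5) by (simp add: coprime_commute)
  ultimately show ?thesis using coprime_dvd_mult_right_iff by blast
qed

lemma prime_power_dvd_cyclotomic3_if_dvd_cube_sub_one:
  fixes p j :: nat and x :: int
  assumes "prime p" and "\<not> [x = 1] (mod int p)" and "int p ^ j dvd x ^ 3 - 1"
  shows "int p ^ j dvd x ^ 2 + x + 1"
proof -
  have "x ^ 3 - 1 = (x ^ 2 + x + 1) * (x - 1)"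
    by (simp add: algebra_simps power2_eq_square power3_eq_cube)
  moreover have "coprime (int p ^ j) (x - 1)"
    using assms(1,2) by (simp add: prime_imp_coprime cong_iff_dvd_diff)
  ultimately show ?thesis using assms(3) coprime_dvd_mult_left_iff by metis
qed

lemma double_exponent_le_if_power_dvd_cyclotomic3:
  fixes B C :: int and j Y Z :: nat
  assumes "B \<ge> 2" and "C \<ge> 4" and "Y \<ge> 4" and "B ^ Y < C ^ Z"
    and "C ^ j dvd B ^ 2 + B + 1"
  shows "2 * j \<le> Z"
proof (rule ccontr)
  assume "\<not> 2 * j \<le> Z"
  then have "C ^ (Z + 1) \<le> C ^ (2 * j)" using assms(2) by (intro power_increasing) auto
  also have "\<dots> = (C ^ j) ^ 2" by (simp add: power_mult [symmetric] mult.commute)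
  also have "\<dots> \<le> (B ^ 2 + B + 1) ^ 2"
  proof -
    have "0 < B ^ 2 + B + 1" using assms(1) by (simp add: add_pos_pos)
    then have "C ^ j \<le> B ^ 2 + B + 1" by (rule zdvd_imp_le [OF assms(5)])
    then show ?thesis using assms(2) by (intro power_mono) auto
  qed
  also have "\<dots> < (2 * B ^ 2) ^ 2"
  proof -
    have "B + 1 < B * B" using assms(1) mult_right_mono[of 2 B B] by linarith
    then show ?thesis using assms(1) by (intro power_strict_mono) (auto simp: power2_eq_square)
  qed
  also have "\<dots> = 4 * B ^ 4" by (simp add: power_mult_distrib)
  also have "\<dots> \<le> C * B ^ Y"
    using assms(1-3) by (intro mult_mono power_increasing) auto
  also have "\<dots> < C * C ^ Z" using assms(2,4) by simp
  finally show False by simp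
qed

theorem mainTheorem10:
  fixes a b c r z Y Z :: nat
  assumes "prime c" and "r \<ge> 1" and "c = 2 ^ r * 3 + 1"
    and "a > 1" and "b > 1"
    and "coprime a b" and "coprime b c" and "coprime a c"
    and "pm_order c (int b) = 3"
    and "z > 0" and "Y > 0" and "Z > 0" and "z \<le> Z"
    and "[Y = 4] (mod 6)"
    and "a + b = c ^ z" and "a + b ^ Y = c ^ Z"
  shows "int Z \<ge> 2 * int z - 2 * int (multiplicity c ((Y - 1) div 3))"
proof -
  define k where "k = (Y - 1) div 3"
  have "c \<ge> 7" and "odd c" using assms(2,3) power_increasing [of 1 r "2::nat"] by auto
  have "\<not> c dvd b" using assms(1,7) by (metis coprime_common_divisor not_prime_unit dvd_refl)
  have Y: "Y = 6 * (Y div 6) + 4" using assms(14) div_mult_mod_eq [of Y 6] unfolding cong_def by simp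
  then have "k = 2 * (Y div 6) + 1" unfolding k_def by simp
  then have "Y - 1 = 3 * k" and "odd k" and "Y \<ge> 4" using Y by simp_all
  have "int c ^ z dvd int b ^ (Y - 1) - 1"
    using dvd_pow_pred_sub_one_if_sums assms(7,11,13,15,16) by blast
  then have dvd_cube_pow: "int c ^ z dvd (int b ^ 3) ^ k - 1"
    unfolding \<open>Y - 1 = 3 * k\<close> power_mult .
  have "[(int b ^ 3) ^ k = 1] (mod int c)"
    unfolding cong_iff_dvd_diff
    using dvd_trans [OF dvd_power [OF disjI1 [OF assms(10)]] dvd_cube_pow] .
  moreover have "[int b ^ 3 = 1] (mod int c) \<or> [int b ^ 3 = -1] (mod int c)"
    using pm_order_cong_pm_one [OF assms(1) \<open>\<not> c dvd b\<close>] assms(9) by simp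
  ultimately have cube: "[int b ^ 3 = 1] (mod int c)"
    using \<open>c \<ge> 7\<close> \<open>odd k\<close> cong_one_if_odd_power_cong_one [of "int c" "int b ^ 3" k] by simp
  have "int c ^ (z - multiplicity c k) dvd int b ^ 3 - 1"
    using prime_power_dvd_sub_one_lift [OF assms(1) \<open>odd c\<close> cube _ dvd_cube_pow] \<open>odd k\<close> by auto
  moreover have "\<not> [int b = 1] (mod int c)"
    using not_cong_pm_one_below_pm_order(1) [of 1 c "int b"] assms(9) by simp
  ultimately have "int c ^ (z - multiplicity c k) dvd int b ^ 2 + int b + 1"
    using prime_power_dvd_cyclotomic3_if_dvd_cube_sub_one assms(1) by blast
  moreover have "int b ^ Y < int c ^ Z"
    using assms(4,16) by (simp flip: of_nat_power)
  ultimately have "2 * (z - multiplicity c k) \<le> Z"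
    using assms(5) \<open>c \<ge> 7\<close> \<open>Y \<ge> 4\<close> by (intro double_exponent_le_if_power_dvd_cyclotomic3) auto
  then show ?thesis unfolding k_def by linarith
qed

end
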